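(* Let $(\vdash,\overline{\cdot},\widehat{\cdot})$ be a setting satisfying Pre-Relevance, let $\mathcal{S},\mathcal{S}'\subseteq\mathcal{L}$ with $\mathcal{S}\mid\mathcal{S}'$, let $\mathcal{E}$ be a preferred extension of $\mathcal{AF}_{\vdash}(\mathcal{S}\cup\mathcal{S}')$ and $\mathcal{E}_1=\mathcal{E}\cap\mathit{Arg}_{\vdash}(\mathcal{S})$. Then $\mathcal{E}_1$ is a preferred extension of $\mathcal{AF}_{\vdash}(\mathcal{S})$.
   Context: $\mathcal{L}$ is the set of formulas of a language built from propositional atoms; $\mathsf{Atoms}(\mathcal{S})$ is the set of atoms occurring in $\mathcal{S}$, and $\mathcal{S}_1\mid\mathcal{S}_2$ means $\mathsf{Atoms}(\mathcal{S}_1)\cap\mathsf{Atoms}(\mathcal{S}_2)=\emptyset$. A setting is $(\vdash,\overline{\cdot},\widehat{\cdot})$ with ${\vdash}\subseteq\wp_{\sf fin}(\mathcal{L})\times\mathcal{L}$ arbitrary, $\overline{\cdot}:\mathcal{L}\to\wp(\mathcal{L})$, $\widehat{\cdot}$ assigning to each nonempty finite set a finite set of formulas, with $\widehat{\emptyset}=\emptyset$. $\mathit{Arg}_{\vdash}(\mathcal{S})=\{(\Gamma,\gamma):\Gamma\subseteq\mathcal{S}\text{ finite},\Gamma\vdash\gamma\}$; $\mathcal{AF}_{\vdash}(\mathcal{S})$ is the attack graph on it where $(\Gamma,\gamma)$ attacks $(\Gamma',\gamma')$ iff $\gamma\in\overline{\phi}$ for some $\phi\in\widehat{\Gamma'}$.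 Complete extension = conflict-free set defending each member (every attacker of a member is attacked by a member) and containing every argument it defends; preferred = $\subseteq$-maximal complete. Pre-Relevance of the setting: (a) for all $\mathcal{S}_1,\mathcal{S}_2,\phi$ with $\mathcal{S}_1\cup\{\phi\}\mid\mathcal{S}_2$, $\mathcal{S}_1\cup\mathcal{S}_2\vdash\phi$ implies $\mathcal{S}_1'\vdash\phi$ for some $\mathcal{S}_1'\subseteq\mathcal{S}_1$; (b) primeness: for all sets of atoms $\mathcal{A}_1\mid\mathcal{A}_2$, all finite $\mathcal{S}_1,\mathcal{T}_1,\mathcal{S}_2,\mathcal{T}_2$ with $\mathsf{Atoms}(\mathcal{S}_i),\mathsf{Atoms}(\mathcal{T}_i)\subseteq\mathcal{A}_i$, and all $\phi,\psi$ with $\psi\in\overline{\phi}$, $\phi\in\widehat{\mathcal{T}_1\cup\mathcal{T}_2}$: if $\mathcal{S}_1\cup\mathcal{S}_2\vdash\psi$ then there are $i\in\{1,2\}$, $\mathcal{S}_i'\subseteq\mathcal{S}_i$, $\phi_i\in\widehat{\mathcal{T}_i}$, $\psi_i\in\overline{\phi_i}$ with $\mathcal{S}_i'\vdash\psi_i$; (c) $\widehat{\Delta}\subseteq\widehat{\Delta\cup\Delta'}$ for all finite $\Delta,\Delta'$. *)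

theory Defs
  imports Main
begin

definition Atoms :: "('f \<Rightarrow> 'a set) \<Rightarrow> 'f set \<Rightarrow> 'a set" where
  "Atoms atoms S = (\<Union>x\<in>S. atoms x)"

definition indep :: "('f \<Rightarrow> 'a set) \<Rightarrow> 'f set \<Rightarrow> 'f set \<Rightarrow> bool" where
  "indep atoms S1 S2 \<longleftrightarrow> Atoms atoms S1 \<inter> Atoms atoms S2 = {}"

definition setting ::
  "('f set \<Rightarrow> 'f \<Rightarrow> bool) \<Rightarrow> ('f \<Rightarrow> 'f set) \<Rightarrow> ('f set \<Rightarrow> 'f set) \<Rightarrow> bool" where
  "setting entails contr hat \<longleftrightarrow>
     (\<forall>\<Gamma> \<gamma>. entails \<Gamma> \<gamma> \<longrightarrow> finite \<Gamma>) \<and>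
     (\<forall>\<Delta>. finite \<Delta> \<longrightarrow> finite (hat \<Delta>)) \<and>
     hat {} = {}"

definition Arg :: "('f set \<Rightarrow> 'f \<Rightarrow> bool) \<Rightarrow> 'f set \<Rightarrow> ('f set \<times> 'f) set" where
  "Arg entails S = {(\<Gamma>, \<gamma>). \<Gamma> \<subseteq> S \<and> finite \<Gamma> \<and> entails \<Gamma> \<gamma>}"

definition attacks ::
  "('f \<Rightarrow> 'f set) \<Rightarrow> ('f set \<Rightarrow> 'f set) \<Rightarrow> ('f set \<times> 'f) \<Rightarrow> ('f set \<times> 'f) \<Rightarrow> bool" where
  "attacks contr hat a b \<longleftrightarrow> (\<exists>\<phi>\<in>hat (fst b). snd a \<in> contr \<phi>)"

definition conflict_free :: "'x set \<Rightarrow> ('x \<Rightarrow> 'x \<Rightarrow> bool) \<Rightarrow> 'x set \<Rightarrow> bool" where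
  "conflict_free Args Att E \<longleftrightarrow> E \<subseteq> Args \<and> (\<forall>a\<in>E. \<forall>b\<in>E. \<not> Att a b)"

definition defends :: "'x set \<Rightarrow> ('x \<Rightarrow> 'x \<Rightarrow> bool) \<Rightarrow> 'x set \<Rightarrow> 'x \<Rightarrow> bool" where
  "defends Args Att E a \<longleftrightarrow>
     (\<forall>b\<in>Args. Att b a \<longrightarrow> (\<exists>c\<in>E. Att c b))"

definition complete_ext :: "'x set \<Rightarrow> ('x \<Rightarrow> 'x \<Rightarrow> bool) \<Rightarrow> 'x set \<Rightarrow> bool" where
  "complete_ext Args Att E \<longleftrightarrow>
     conflict_free Args Att E \<and>
     (\<forall>a\<in>E. defends Args Att E a) \<and>
     (\<forall>a\<in>Args. defends Args Att E a \<longrightarrow> a \<in> E)"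

definition preferred_ext :: "'x set \<Rightarrow> ('x \<Rightarrow> 'x \<Rightarrow> bool) \<Rightarrow> 'x set \<Rightarrow> bool" where
  "preferred_ext Args Att E \<longleftrightarrow>
     complete_ext Args Att E \<and>
     (\<forall>E'. complete_ext Args Att E' \<and> E \<subseteq> E' \<longrightarrow> E' = E)"

definition pre_relevance ::
  "('f \<Rightarrow> 'a set) \<Rightarrow> ('f set \<Rightarrow> 'f \<Rightarrow> bool) \<Rightarrow> ('f \<Rightarrow> 'f set) \<Rightarrow> ('f set \<Rightarrow> 'f set) \<Rightarrow> bool" where
  "pre_relevance atoms entails contr hat \<longleftrightarrow>
     (\<forall>S1 S2 \<phi>. indep atoms (S1 \<union> {\<phi>}) S2 \<longrightarrow> entails (S1 \<union> S2) \<phi> \<longrightarrow>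
        (\<exists>S1'\<subseteq>S1. entails S1' \<phi>)) \<and>
     (\<forall>A1 A2 S1 T1 S2 T2 \<phi> \<psi>.
        A1 \<inter> A2 = {} \<longrightarrow>
        finite S1 \<longrightarrow> finite T1 \<longrightarrow> finite S2 \<longrightarrow> finite T2 \<longrightarrow>
        Atoms atoms S1 \<subseteq> A1 \<longrightarrow> Atoms atoms T1 \<subseteq> A1 \<longrightarrow>
        Atoms atoms S2 \<subseteq> A2 \<longrightarrow> Atoms atoms T2 \<subseteq> A2 \<longrightarrow>
        \<psi> \<in> contr \<phi> \<longrightarrow> \<phi> \<in> hat (T1 \<union> T2) \<longrightarrow> entails (S1 \<union> S2) \<psi> \<longrightarrow>
        ((\<exists>S1'\<subseteq>S1. \<exists>\<phi>1\<in>hat T1. \<exists>\<psi>1\<in>contr \<phi>1. entails S1' \<psi>1) \<or>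
         (\<exists>S2'\<subseteq>S2. \<exists>\<phi>2\<in>hat T2. \<exists>\<psi>2\<in>contr \<phi>2. entails S2' \<psi>2))) \<and>
     (\<forall>\<Delta> \<Delta>'. finite \<Delta> \<longrightarrow> finite \<Delta>' \<longrightarrow> hat \<Delta> \<subseteq> hat (\<Delta> \<union> \<Delta>'))"

end

theory Submission
  imports Defs
begin

(* An argument attacks another only through the premises of the target, and attacks are
   inherited by arguments with more premises. By primeness, an attacker (\<Gamma>, \<gamma>) built from
   S \<union> S' of an argument built from S can be cut down to an attacker (\<Gamma>', \<gamma>') with
   \<Gamma>' \<subseteq> \<Gamma> \<inter> S, since the S'-part of \<Gamma> can only contribute attacks on hat {} = {}.
   Consequently complete extensions are closed under such sub-arguments, every
   counterattack by E on an S-argument can be made by E \<inter> Arg(S), and the union of E with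
   a complete extension of the S-framework containing E \<inter> Arg(S) is admissible in the
   big framework; maximality of E then yields maximality of E \<inter> Arg(S). *)

definition admissible :: "'x set \<Rightarrow> ('x \<Rightarrow> 'x \<Rightarrow> bool) \<Rightarrow> 'x set \<Rightarrow> bool" where
  "admissible Args Att A \<longleftrightarrow> conflict_free Args Att A \<and> (\<forall>a\<in>A. defends Args Att A a)"

lemma defends_mono: "defends Args Att A a \<Longrightarrow> A \<subseteq> B \<Longrightarrow> defends Args Att B a"
  unfolding defends_def by blast

lemma complete_ext_imp_admissible: "complete_ext Args Att E \<Longrightarrow> admissible Args Att E"
  unfolding complete_ext_def admissible_def by blast

lemma admissible_insert:
  assumes adm: "admissible Args Att A" and a: "a \<in> Args" and def_a: "defends Args Att A a"
  shows "admissible Args Att (insert a A)"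
proof -
  have A_Args: "A \<subseteq> Args" and cf: "\<forall>x\<in>A. \<forall>y\<in>A. \<not> Att x y"
    and def_A: "\<forall>x\<in>A. defends Args Att A x"
    using adm unfolding admissible_def conflict_free_def by auto
  have no_attack_on_a: "\<not> Att x a" if "x \<in> A" for x
    using def_a cf A_Args that unfolding defends_def by blast
  have "\<not> Att a x" if x: "x \<in> insert a A" for x
  proof
    assume "Att a x"
    then obtain c where "c \<in> A" "Att c a"
      using x def_A def_a a unfolding defends_def by blast
    then show False using no_attack_on_a by blast
  qed
  with cf no_attack_on_a have "conflict_free Args Att (insert a A)"
    using A_Args a unfolding conflict_free_def by blast
  moreover have "defends Args Att (insert a A) x" if "x \<in> insert a A" for x
    using that def_A def_a defends_mono[of Args Att A _ "insert a A"] by blast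
  ultimately show ?thesis unfolding admissible_def by blast
qed

lemma admissible_Union_chain:
  assumes "C \<noteq> {}" and "subset.chain {X. admissible Args Att X} C"
  shows "admissible Args Att (\<Union>C)"
proof -
  have adm: "\<And>X. X \<in> C \<Longrightarrow> admissible Args Att X"
    and total: "\<And>X Y. X \<in> C \<Longrightarrow> Y \<in> C \<Longrightarrow> X \<subseteq> Y \<or> Y \<subseteq> X"
    using assms(2) unfolding subset_chain_def by blast+
  have "\<not> Att x y" if xy: "x \<in> \<Union>C" "y \<in> \<Union>C" for x y
  proof -
    obtain Z where "Z \<in> C" "x \<in> Z" "y \<in> Z" using xy total by blast
    then show ?thesis using adm unfolding admissible_def conflict_free_def by blast
  qed
  moreover have "defends Args Att (\<Union>C) a" if "a \<in> \<Union>C" for a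
    using that adm defends_mono[of Args Att _ a "\<Union>C"] unfolding admissible_def by blast
  moreover have "\<Union>C \<subseteq> Args"
    using adm unfolding admissible_def conflict_free_def by blast
  ultimately show ?thesis unfolding admissible_def conflict_free_def by blast
qed

lemma admissible_imp_complete_superset:
  assumes "admissible Args Att A"
  obtains M where "complete_ext Args Att M" "A \<subseteq> M"
proof -
  let ?C = "{X. admissible Args Att X \<and> A \<subseteq> X}"
  have "\<exists>M\<in>?C. \<forall>X\<in>?C. M \<subseteq> X \<longrightarrow> X = M"
  proof (rule subset_Zorn_nonempty)
    show "?C \<noteq> {}" using assms by blast
  next
    fix C assume C: "C \<noteq> {}" "subset.chain ?C C"
    then have "subset.chain {X. admissible Args Att X} C" "A \<subseteq> \<Union>C"
      unfolding subset_chain_def by blast+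
    with C(1) show "\<Union>C \<in> ?C" by (simp add: admissible_Union_chain)
  qed
  then obtain M where M: "admissible Args Att M" "A \<subseteq> M"
    and maximal: "\<forall>X\<in>?C. M \<subseteq> X \<longrightarrow> X = M" by blast
  have "a \<in> M" if "a \<in> Args" "defends Args Att M a" for a
    using admissible_insert[OF M(1) that] M(2) maximal by blast
  with M(1) have "complete_ext Args Att M" unfolding complete_ext_def admissible_def by blast
  then show ?thesis using M(2) by (rule that)
qed

lemma preferred_ext_admissible_superset_eq:
  assumes "preferred_ext Args Att E" "admissible Args Att A" "E \<subseteq> A"
  shows "A = E"
proof -
  obtain M where "complete_ext Args Att M" "A \<subseteq> M"
    using admissible_imp_complete_superset[OF assms(2)] .
  with assms show ?thesis unfolding preferred_ext_def by blast
qed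

(* sub b' b: b' is a sub-argument of b; for logical arguments, the premises of b' are among those of b. *)
locale relevant_subframework =
  fixes Args Args1 :: "'x set" and Att :: "'x \<Rightarrow> 'x \<Rightarrow> bool" and sub :: "'x \<Rightarrow> 'x \<Rightarrow> bool"
  assumes subframework: "Args1 \<subseteq> Args"
    and attack_inherited: "b \<in> Args \<Longrightarrow> sub b' b \<Longrightarrow> Att c b' \<Longrightarrow> Att c b"
    and attacker_reducible:
      "a \<in> Args1 \<Longrightarrow> b \<in> Args \<Longrightarrow> Att b a \<Longrightarrow> \<exists>b'\<in>Args1. sub b' b \<and> Att b' a"
begin

lemma complete_ext_sub_closed:
  assumes E: "complete_ext Args Att E" and "b \<in> E" "b' \<in> Args" "sub b' b"
  shows "b' \<in> E"
proof -
  have "b \<in> Args" "defends Args Att E b"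
    using E \<open>b \<in> E\<close> unfolding complete_ext_def conflict_free_def by blast+
  then have "defends Args Att E b'"
    using attack_inherited \<open>sub b' b\<close> unfolding defends_def by blast
  then show ?thesis using E \<open>b' \<in> Args\<close> unfolding complete_ext_def by blast
qed

lemma complete_ext_counterattack_in_subframework:
  assumes E: "complete_ext Args Att E" and "c \<in> E" "b \<in> Args1" "Att c b"
  shows "\<exists>c'\<in>E \<inter> Args1. Att c' b"
proof -
  have "c \<in> Args" using E \<open>c \<in> E\<close> unfolding complete_ext_def conflict_free_def by blast
  then obtain c' where "c' \<in> Args1" "sub c' c" "Att c' b"
    using attacker_reducible assms(3,4) by blast
  then show ?thesis using complete_ext_sub_closed[OF E \<open>c \<in> E\<close>] subframework by blast
qed

lemma defends_subframework_imp_defends: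
  assumes "a \<in> Args1" "defends Args1 Att D a"
  shows "defends Args Att D a"
  unfolding defends_def
proof (intro ballI impI)
  fix b assume "b \<in> Args" "Att b a"
  then obtain b' where "b' \<in> Args1" "sub b' b" "Att b' a"
    using attacker_reducible \<open>a \<in> Args1\<close> by blast
  then obtain c where "c \<in> D" "Att c b'" using assms(2) unfolding defends_def by blast
  then show "\<exists>c\<in>D. Att c b" using attack_inherited \<open>b \<in> Args\<close> \<open>sub b' b\<close> by blast
qed

lemma complete_ext_restrict:
  assumes E: "complete_ext Args Att E"
  shows "complete_ext Args1 Att (E \<inter> Args1)"
proof -
  have cf_E: "conflict_free Args Att E" and def_E: "\<forall>a\<in>E. defends Args Att E a"
    and closed_E: "\<forall>a\<in>Args. defends Args Att E a \<longrightarrow> a \<in> E"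
    using E unfolding complete_ext_def by blast+
  have "defends Args1 Att (E \<inter> Args1) a" if a: "a \<in> E \<inter> Args1" for a
    unfolding defends_def
  proof (intro ballI impI)
    fix b assume b: "b \<in> Args1" "Att b a"
    have "defends Args Att E a" using a def_E by blast
    then obtain c where "c \<in> E" "Att c b"
      using b subframework unfolding defends_def by blast
    then show "\<exists>c\<in>E \<inter> Args1. Att c b"
      using complete_ext_counterattack_in_subframework[OF E] b(1) by blast
  qed
  moreover have "a \<in> E \<inter> Args1" if a: "a \<in> Args1" "defends Args1 Att (E \<inter> Args1) a" for a
  proof -
    have "defends Args Att (E \<inter> Args1) a" using defends_subframework_imp_defends[OF a] .
    then have "defends Args Att E a" by (rule defends_mono) blast
    then show ?thesis using closed_E a(1) subframework by blast
  qed
  moreover have "conflict_free Args1 Att (E \<inter> Args1)"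
    using cf_E unfolding conflict_free_def by blast
  ultimately show ?thesis unfolding complete_ext_def by blast
qed

lemma admissible_Un_subframework:
  assumes E: "complete_ext Args Att E" and F: "admissible Args1 Att F" and "E \<inter> Args1 \<subseteq> F"
  shows "admissible Args Att (E \<union> F)"
proof -
  have F_Args1: "F \<subseteq> Args1" and cf_F: "\<forall>x\<in>F. \<forall>y\<in>F. \<not> Att x y"
    and def_F: "\<forall>a\<in>F. defends Args1 Att F a"
    using F unfolding admissible_def conflict_free_def by blast+
  have E_Args: "E \<subseteq> Args" and cf_E: "\<forall>x\<in>E. \<forall>y\<in>E. \<not> Att x y"
    and def_E: "\<forall>a\<in>E. defends Args Att E a"
    using E unfolding complete_ext_def conflict_free_def by blast+
  \<comment> \<open>an attack of E on a member of F would be carried out inside F\<close>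
  have no_attack_on_F: "\<not> Att c b" if "c \<in> E" "b \<in> F" for c b
    using complete_ext_counterattack_in_subframework[OF E that(1)] that(2) F_Args1 cf_F assms(3) by blast
  have "\<not> Att x y" if "x \<in> E \<union> F" "y \<in> E \<union> F" for x y
  proof
    assume "Att x y"
    show False
    proof (cases "x \<in> E")
      case True
      then show False using \<open>Att x y\<close> that(2) cf_E no_attack_on_F by blast
    next
      case False
      then have "x \<in> F" "x \<in> Args" using that(1) F_Args1 subframework by blast+
      show False
      proof (cases "y \<in> E")
        case True
        then show False
          using def_E \<open>x \<in> Args\<close> \<open>Att x y\<close> \<open>x \<in> F\<close> no_attack_on_F unfolding defends_def by blast
      next
        case False
        then show False using \<open>x \<in> F\<close> that(2) cf_F \<open>Att x y\<close> by blast
      qed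
    qed
  qed
  moreover have "defends Args Att (E \<union> F) a" if "a \<in> E \<union> F" for a
    using that def_E def_F F_Args1 defends_subframework_imp_defends
      defends_mono[of Args Att E a "E \<union> F"] defends_mono[of Args Att F a "E \<union> F"] by blast
  moreover have "E \<union> F \<subseteq> Args" using E_Args F_Args1 subframework by blast
  ultimately show ?thesis unfolding admissible_def conflict_free_def by blast
qed

lemma preferred_ext_restrict:
  assumes E: "preferred_ext Args Att E"
  shows "preferred_ext Args1 Att (E \<inter> Args1)"
proof -
  have E_complete: "complete_ext Args Att E" using E unfolding preferred_ext_def by blast
  have "F = E \<inter> Args1" if F: "complete_ext Args1 Att F" and "E \<inter> Args1 \<subseteq> F" for F
  proof -
    have "admissible Args Att (E \<union> F)"
      using admissible_Un_subframework[OF E_complete complete_ext_imp_admissible[OF F]] that(2) .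
    then have "E \<union> F = E" using preferred_ext_admissible_superset_eq[OF E] by blast
    moreover have "F \<subseteq> Args1" using F unfolding complete_ext_def conflict_free_def by blast
    ultimately show ?thesis using that(2) by blast
  qed
  then show ?thesis using complete_ext_restrict[OF E_complete] unfolding preferred_ext_def by blast
qed

end

lemma pre_relevance_hat_mono:
  assumes "pre_relevance atoms entails contr hat" "finite \<Delta>'" "\<Delta> \<subseteq> \<Delta>'"
  shows "hat \<Delta> \<subseteq> hat \<Delta>'"
proof -
  have "finite \<Delta>" "\<Delta>' = \<Delta> \<union> \<Delta>'" using assms(2,3) finite_subset by blast+
  then show ?thesis using assms(1,2) unfolding pre_relevance_def by metis
qed

lemma pre_relevance_prime:
  assumes "pre_relevance atoms entails contr hat" "A1 \<inter> A2 = {}"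
    and "finite S1" "finite T1" "finite S2" "finite T2"
    and "Atoms atoms S1 \<subseteq> A1" "Atoms atoms T1 \<subseteq> A1"
    and "Atoms atoms S2 \<subseteq> A2" "Atoms atoms T2 \<subseteq> A2"
    and "\<psi> \<in> contr \<phi>" "\<phi> \<in> hat (T1 \<union> T2)" "entails (S1 \<union> S2) \<psi>"
  shows "(\<exists>S1'\<subseteq>S1. \<exists>\<phi>1\<in>hat T1. \<exists>\<psi>1\<in>contr \<phi>1. entails S1' \<psi>1) \<or>
         (\<exists>S2'\<subseteq>S2. \<exists>\<phi>2\<in>hat T2. \<exists>\<psi>2\<in>contr \<phi>2. entails S2' \<psi>2)"
  using assms unfolding pre_relevance_def by blast

lemma attacker_reducible_to_independent_part:
  assumes "setting entails contr hat" "pre_relevance atoms entails contr hat" "indep atoms S S'"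
    and b: "b \<in> Arg entails (S \<union> S')" and a: "a \<in> Arg entails S" and "attacks contr hat b a"
  shows "\<exists>b'\<in>Arg entails S. fst b' \<subseteq> fst b \<and> attacks contr hat b' a"
proof -
  obtain \<Gamma> \<gamma> \<Delta> \<delta> where b_def: "b = (\<Gamma>, \<gamma>)" and a_def: "a = (\<Delta>, \<delta>)" by fastforce
  have \<Gamma>: "\<Gamma> \<subseteq> S \<union> S'" "finite \<Gamma>" "entails \<Gamma> \<gamma>" and \<Delta>: "\<Delta> \<subseteq> S" "finite \<Delta>"
    using a b unfolding a_def b_def Arg_def by auto
  obtain \<phi> where \<phi>: "\<phi> \<in> hat (\<Delta> \<union> {})" "\<gamma> \<in> contr \<phi>"
    using assms(6) unfolding a_def b_def attacks_def by auto
  have split: "(\<Gamma> \<inter> S) \<union> (\<Gamma> \<inter> S') = \<Gamma>" using \<Gamma>(1) by blast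
  have "(\<exists>\<Gamma>'\<subseteq>\<Gamma> \<inter> S. \<exists>\<phi>1\<in>hat \<Delta>. \<exists>\<psi>1\<in>contr \<phi>1. entails \<Gamma>' \<psi>1) \<or>
        (\<exists>\<Gamma>'\<subseteq>\<Gamma> \<inter> S'. \<exists>\<phi>2\<in>hat {}. \<exists>\<psi>2\<in>contr \<phi>2. entails \<Gamma>' \<psi>2)"
    using assms(3) \<Gamma>(2,3) \<Delta> \<phi> unfolding indep_def
    by (intro pre_relevance_prime[OF assms(2), where ?A1.0 = "Atoms atoms S" and ?A2.0 = "Atoms atoms S'"])
      (auto simp: split Atoms_def)
  then obtain \<Gamma>' \<psi> \<phi>' where "\<Gamma>' \<subseteq> \<Gamma> \<inter> S" "\<phi>' \<in> hat \<Delta>" "\<psi> \<in> contr \<phi>'" "entails \<Gamma>' \<psi>"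
    using assms(1) unfolding setting_def by auto
  then show ?thesis using \<Gamma>(2) finite_subset[of \<Gamma>' \<Gamma>]
    by (intro bexI[of _ "(\<Gamma>', \<psi>)"]) (auto simp: Arg_def attacks_def a_def b_def)
qed

lemma relevant_subframework_Arg:
  assumes "setting entails contr hat" "pre_relevance atoms entails contr hat" "indep atoms S S'"
  shows "relevant_subframework (Arg entails (S \<union> S')) (Arg entails S) (attacks contr hat)
           (\<lambda>b' b. fst b' \<subseteq> fst b)"
proof
  show "Arg entails S \<subseteq> Arg entails (S \<union> S')" unfolding Arg_def by auto
next
  fix b b' c
  assume b: "b \<in> Arg entails (S \<union> S')" and sub: "fst b' \<subseteq> fst b"
    and att: "attacks contr hat c b'"
  have "finite (fst b)" using b unfolding Arg_def by auto
  then have "hat (fst b') \<subseteq> hat (fst b)" using sub by (rule pre_relevance_hat_mono[OF assms(2)])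
  then show "attacks contr hat c b" using att unfolding attacks_def by blast
next
  fix a b
  assume "a \<in> Arg entails S" "b \<in> Arg entails (S \<union> S')" "attacks contr hat b a"
  then show "\<exists>b'\<in>Arg entails S. fst b' \<subseteq> fst b \<and> attacks contr hat b' a"
    using attacker_reducible_to_independent_part[OF assms] by blast
qed

theorem lemma8:
  fixes atoms :: "'f \<Rightarrow> 'a set"
    and entails :: "'f set \<Rightarrow> 'f \<Rightarrow> bool"
    and contr :: "'f \<Rightarrow> 'f set"
    and hat :: "'f set \<Rightarrow> 'f set"
    and S S' :: "'f set"
    and E :: "('f set \<times> 'f) set"
  assumes "setting entails contr hat"
    and "pre_relevance atoms entails contr hat"
    and "indep atoms S S'"
    and "preferred_ext (Arg entails (S \<union> S')) (attacks contr hat) E"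
  shows "preferred_ext (Arg entails S) (attacks contr hat) (E \<inter> Arg entails S)"
  using relevant_subframework.preferred_ext_restrict[OF relevant_subframework_Arg[OF assms(1-3)] assms(4)] .

end
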